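(* Fix $-1 \leq a < 1$ and let $\mathfrak{g} = \mathfrak{r}_{3,a}$, the three-dimensional Lie algebra with basis $\{e_1,e_2,e_3\}$ and nonzero brackets $[e_1,e_2]=e_2$, $[e_1,e_3]=ae_3$. For every inner product $\langle\cdot,\cdot\rangle$ on $\mathfrak{g}$, there exist $\lambda \in \mathbb{R}$, $k > 0$, and an orthonormal basis $\{x_1, x_2, x_3\}$ with respect to $k \langle\cdot,\cdot\rangle$ such that the bracket relations are given by \[ [x_1 , x_2] = x_2 + \lambda (a-1)x_3 , \quad [x_1 , x_3] = a x_3 \] (and $[x_2,x_3]=0$). Furthermore, the matrix expression of the derivation algebra $\mathrm{Der}(\mathfrak{g})$ with respect to $\{x_1, x_2, x_3\}$ coincides with \[ \left\{ \begin{pmatrix} 0 & 0 & 0 \\ x_{21} & x_{22} & 0 \\ x_{31} & \lambda (x_{33} - x_{22}) & x_{33} \end{pmatrix} \;\middle|\; x_{21}, x_{22}, x_{31}, x_{33} \in \mathbb{R} \right\}. \] *)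

theory Defs
  imports "HOL-Analysis.Analysis"
begin

text \<open>The Lie algebra r_{3,a} is modelled on real^3, vectors being coordinate
  vectors with respect to the basis e1, e2, e3 (the standard basis).
  Its bracket is the bilinear extension of [e1,e2] = e2, [e1,e3] = a e3,
  [e2,e3] = 0.\<close>

definition r3_bracket :: "real \<Rightarrow> real^3 \<Rightarrow> real^3 \<Rightarrow> real^3" where
  "r3_bracket a u v =
     vector [0, u$1 * v$2 - u$2 * v$1, a * (u$1 * v$3 - u$3 * v$1)]"

definition is_inner_product :: "('v::real_vector \<Rightarrow> 'v \<Rightarrow> real) \<Rightarrow> bool" where
  "is_inner_product ip \<longleftrightarrow> bilinear ip \<and> (\<forall>u v. ip u v = ip v u) \<and> (\<forall>u. u \<noteq> 0 \<longrightarrow> ip u u > 0)"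

definition derivations :: "('v::real_vector \<Rightarrow> 'v \<Rightarrow> 'v) \<Rightarrow> ('v \<Rightarrow> 'v) set" where
  "derivations br = {D. linear D \<and> (\<forall>u v. D (br u v) = br (D u) v + br u (D v))}"

definition matrix_wrt :: "(3 \<Rightarrow> real^3) \<Rightarrow> (real^3 \<Rightarrow> real^3) \<Rightarrow> real^3^3 \<Rightarrow> bool" where
  "matrix_wrt x D M \<longleftrightarrow> (\<forall>j. D (x j) = (\<Sum>i\<in>UNIV. (M$i$j) *\<^sub>R x i))"

end

theory Submission
  imports Defs
begin

text \<open>Gram--Schmidt applied to \<open>e\<^sub>3, e\<^sub>2, e\<^sub>1\<close> (in this order) produces an orthogonal basis
  which is triangular with respect to \<open>e\<^sub>1, e\<^sub>2, e\<^sub>3\<close>: \<open>f\<^sub>3 = e\<^sub>3\<close>, \<open>f\<^sub>2 \<in> e\<^sub>2 + \<real>e\<^sub>3\<close> and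
  \<open>f\<^sub>1 \<in> e\<^sub>1 + span{e\<^sub>2, e\<^sub>3}\<close>. Scaling the inner product so that \<open>f\<^sub>1\<close> becomes a unit vector
  and normalising \<open>f\<^sub>2, f\<^sub>3\<close> gives the basis \<open>x\<close>; since \<open>x\<^sub>1 \<equiv> e\<^sub>1\<close> modulo the abelian
  ideal \<open>span{e\<^sub>2, e\<^sub>3}\<close>, the brackets of \<open>x\<close> are those of \<open>e\<close> up to the shear coming from
  \<open>f\<^sub>2 \<notin> \<real>e\<^sub>2\<close>. For \<open>a \<noteq> 1\<close> the derivations are exactly the maps whose matrix with respect
  to \<open>e\<close> has zero first row and zero \<open>(2,3)\<close> and \<open>(3,2)\<close> entries; rewriting such a matrix
  in the basis \<open>x\<close> turns the shear into the entry \<open>\<lambda>(x\<^sub>3\<^sub>3 - x\<^sub>2\<^sub>2)\<close>.\<close>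

lemma r3_bracket_nth [simp]:
  "r3_bracket a u v $ 1 = 0"
  "r3_bracket a u v $ 2 = u$1 * v$2 - u$2 * v$1"
  "r3_bracket a u v $ 3 = a * (u$1 * v$3 - u$3 * v$1)"
  by (simp_all add: r3_bracket_def)

lemma r3_derivation_iff:
  assumes "a \<noteq> 1"
  shows "D \<in> derivations (r3_bracket a) \<longleftrightarrow>
    (\<exists>p2 p3 q2 r3. \<forall>v. D v = vector [0, p2 * v$1 + q2 * v$2, p3 * v$1 + r3 * v$3])"
proof
  assume "D \<in> derivations (r3_bracket a)"
  then have lin: "linear D"
    and der: "\<And>u v. D (r3_bracket a u v) = r3_bracket a (D u) v + r3_bracket a u (D v)"
    by (auto simp: derivations_def)
  define e1 :: "real^3" where "e1 = vector [1, 0, 0]"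
  define e2 :: "real^3" where "e2 = vector [0, 1, 0]"
  define e3 :: "real^3" where "e3 = vector [0, 0, 1]"
  have "r3_bracket a e1 e2 = e2" "r3_bracket a e1 e3 = a *\<^sub>R e3" "r3_bracket a e2 e3 = 0"
    by (simp_all add: e1_def e2_def e3_def vec_eq_iff forall_3)
  then have "D e2 = r3_bracket a (D e1) e2 + r3_bracket a e1 (D e2)"
    and "a *\<^sub>R D e3 = r3_bracket a (D e1) e3 + r3_bracket a e1 (D e3)"
    and "0 = r3_bracket a (D e2) e3 + r3_bracket a e2 (D e3)"
    using der[of e1 e2] der[of e1 e3] der[of e2 e3]
    by (simp_all add: linear_scale[OF lin] linear_0[OF lin])
  then have d12: "D e1 $ 1 = 0" "D e2 $ 1 = 0" "(1 - a) * D e2 $ 3 = 0"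
    and d13: "(1 - a) * D e3 $ 2 = 0" and d23: "D e3 $ 1 = 0"
    by (simp_all add: vec_eq_iff forall_3 e1_def e2_def e3_def algebra_simps)
  have zero: "D e2 $ 3 = 0" "D e3 $ 2 = 0"
    using d12(3) d13 assms by simp_all
  have decompose: "v = v$1 *\<^sub>R e1 + v$2 *\<^sub>R e2 + v$3 *\<^sub>R e3" for v :: "real^3"
    by (simp add: vec_eq_iff forall_3 e1_def e2_def e3_def)
  have Dv: "D v = v$1 *\<^sub>R D e1 + v$2 *\<^sub>R D e2 + v$3 *\<^sub>R D e3" for v
    by (subst decompose) (simp add: linear_add[OF lin] linear_scale[OF lin])
  have "D v = vector [0, D e1$2 * v$1 + D e2$2 * v$2, D e1$3 * v$1 + D e3$3 * v$3]" for v
    by (rule trans[OF Dv]) (simp add: d12 d23 zero vec_eq_iff forall_3)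
  then show "\<exists>p2 p3 q2 r3. \<forall>v. D v = vector [0, p2 * v$1 + q2 * v$2, p3 * v$1 + r3 * v$3]"
    by blast
next
  assume "\<exists>p2 p3 q2 r3. \<forall>v. D v = vector [0, p2 * v$1 + q2 * v$2, p3 * v$1 + r3 * v$3]"
  then obtain p2 p3 q2 r3 where D: "\<And>v. D v = vector [0, p2 * v$1 + q2 * v$2, p3 * v$1 + r3 * v$3]"
    by blast
  have "linear D"
    by (rule linearI) (simp_all add: D vec_eq_iff forall_3 algebra_simps)
  then show "D \<in> derivations (r3_bracket a)"
    by (simp add: derivations_def D vec_eq_iff forall_3 algebra_simps)
qed

definition triangular_basis :: "real \<Rightarrow> real \<Rightarrow> real \<Rightarrow> real \<Rightarrow> real \<Rightarrow> 3 \<Rightarrow> real^3" where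
  "triangular_basis b c s2 t s3 i =
     (if i = 1 then vector [1, b, c] else if i = 2 then vector [0, s2, s2 * t] else vector [0, 0, s3])"

lemma triangular_basis_simps [simp]:
  "triangular_basis b c s2 t s3 1 = vector [1, b, c]"
  "triangular_basis b c s2 t s3 2 = vector [0, s2, s2 * t]"
  "triangular_basis b c s2 t s3 3 = vector [0, 0, s3]"
  by (simp_all add: triangular_basis_def)

lemma r3_bracket_triangular_basis:
  fixes a b c s2 t s3 :: real
  assumes "s3 \<noteq> 0"
  defines "x \<equiv> triangular_basis b c s2 t s3"
  shows "r3_bracket a (x 1) (x 2) = x 2 + (s2 * t / s3 * (a - 1)) *\<^sub>R x 3"
    and "r3_bracket a (x 1) (x 3) = a *\<^sub>R x 3"
    and "r3_bracket a (x 2) (x 3) = 0"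
  using assms by (simp_all add: vec_eq_iff forall_3 field_simps)

lemma r3_derivation_matrices_triangular_basis:
  fixes a b c s2 t s3 :: real
  assumes "a \<noteq> 1" and "s2 \<noteq> 0" and "s3 \<noteq> 0"
  defines "x \<equiv> triangular_basis b c s2 t s3" and "lam \<equiv> s2 * t / s3"
  shows "{M. \<exists>D\<in>derivations (r3_bracket a). matrix_wrt x D M} =
           {M. \<exists>x21 x22 x31 x33.
                 M = vector [vector [0, 0, 0],
                             vector [x21, x22, 0],
                             vector [x31, lam * (x33 - x22), x33]]}"
proof (intro set_eqI iffI; clarsimp)
  fix M D
  assume "D \<in> derivations (r3_bracket a)" and M: "matrix_wrt x D M"
  then obtain p2 p3 q2 r3
    where D: "\<And>v. D v = vector [0, p2 * v$1 + q2 * v$2, p3 * v$1 + r3 * v$3]"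
    using r3_derivation_iff[OF assms(1)] by blast
  have col: "D (x j) = M$1$j *\<^sub>R x 1 + M$2$j *\<^sub>R x 2 + M$3$j *\<^sub>R x 3" for j
    using M by (simp add: matrix_wrt_def sum_3)
  have col2: "0 = M$1$2" "q2 * s2 = M$1$2 * b + M$2$2 * s2"
      "r3 * s2 * t = M$1$2 * c + M$2$2 * s2 * t + M$3$2 * s3"
    using col[of 2] by (auto simp: x_def D vec_eq_iff forall_3 algebra_simps)
  have col3: "0 = M$1$3" "0 = M$1$3 * b + M$2$3 * s2" "r3 * s3 = M$1$3 * c + M$2$3 * s2 * t + M$3$3 * s3"
    using col[of 3] by (auto simp: x_def D vec_eq_iff forall_3 algebra_simps)
  have "0 = M$1$1"
    using col[of 1] by (simp add: x_def D vec_eq_iff forall_3)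
  moreover have "M$2$3 = 0" and "M$2$2 = q2"
    using col2 col3 assms(2) by simp_all
  moreover have "M$3$3 = r3"
    using col3 \<open>M$2$3 = 0\<close> assms(3) by simp
  moreover have "M$3$2 = lam * (M$3$3 - M$2$2)"
    using col2 \<open>M$2$2 = q2\<close> \<open>M$3$3 = r3\<close> assms(3) by (simp add: lam_def field_simps)
  ultimately show "\<exists>x21 x22 x31 x33.
      M = vector [vector [0, 0, 0], vector [x21, x22, 0], vector [x31, lam * (x33 - x22), x33]]"
    using col2(1) col3(1) by (intro exI[of _ "M$2$1"] exI[of _ "M$2$2"] exI[of _ "M$3$1"]
        exI[of _ "M$3$3"]) (simp add: vec_eq_iff forall_3)
next
  fix x21 x22 x31 x33
  define M :: "real^3^3"
    where "M = vector [vector [0, 0, 0], vector [x21, x22, 0], vector [x31, lam * (x33 - x22), x33]]"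
  \<comment> \<open>the \<open>v$1\<close>-coefficients are chosen so that \<open>D (x 1) = x21 *\<^sub>R x 2 + x31 *\<^sub>R x 3\<close>\<close>
  define D where "D = (\<lambda>v::real^3. vector [0, (x21 * s2 - x22 * b) * v$1 + x22 * v$2,
                    (x21 * s2 * t + x31 * s3 - x33 * c) * v$1 + x33 * v$3] :: real^3)"
  have "D \<in> derivations (r3_bracket a)"
    using r3_derivation_iff[OF assms(1)] by (auto simp: D_def)
  moreover have "matrix_wrt x D M"
    using assms(3) by (simp add: matrix_wrt_def forall_3 sum_3 M_def D_def x_def lam_def
        vec_eq_iff field_simps)
  ultimately show "\<exists>D\<in>derivations (r3_bracket a). matrix_wrt x D
      (vector [vector [0, 0, 0], vector [x21, x22, 0], vector [x31, lam * (x33 - x22), x33]])"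
    unfolding M_def by blast
qed

lemma inner_product_triangular_orthonormal_basis:
  assumes "is_inner_product ip"
  obtains b c s2 t s3 k where "s2 > 0" and "s3 > 0" and "k > 0"
    and "\<And>i j. k * ip (triangular_basis b c s2 t s3 i) (triangular_basis b c s2 t s3 j) =
                 (if i = j then 1 else 0)"
proof -
  have B: "bilinear ip" and sym: "\<And>u v. ip u v = ip v u" and pos: "\<And>u. u \<noteq> 0 \<Longrightarrow> ip u u > 0"
    using assms by (auto simp: is_inner_product_def)
  note bilin = bilinear_ladd[OF B] bilinear_radd[OF B] bilinear_lmul[OF B] bilinear_rmul[OF B]
    bilinear_lsub[OF B] bilinear_rsub[OF B]
  define e1 :: "real^3" where "e1 = vector [1, 0, 0]"
  define e2 :: "real^3" where "e2 = vector [0, 1, 0]"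
  define f3 :: "real^3" where "f3 = vector [0, 0, 1]"
  define \<tau> where "\<tau> = ip e2 f3 / ip f3 f3"
  define f2 where "f2 = e2 - \<tau> *\<^sub>R f3"
  define \<alpha> where "\<alpha> = ip e1 f2 / ip f2 f2"
  define \<beta> where "\<beta> = ip e1 f3 / ip f3 f3"
  define f1 where "f1 = e1 - \<alpha> *\<^sub>R f2 - \<beta> *\<^sub>R f3"
  have N3: "ip f3 f3 > 0"
    by (rule pos) (simp add: f3_def vec_eq_iff forall_3)
  have N2: "ip f2 f2 > 0"
    by (rule pos) (simp add: f2_def e2_def f3_def vec_eq_iff forall_3)
  have N1: "ip f1 f1 > 0"
    by (rule pos) (simp add: f1_def f2_def e1_def e2_def f3_def vec_eq_iff forall_3)
  have o23: "ip f2 f3 = 0"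
    using N3 by (simp add: f2_def bilin \<tau>_def)
  have o12: "ip f1 f2 = 0"
    using N2 o23 sym[of f3 f2] by (simp add: f1_def bilin \<alpha>_def)
  have o13: "ip f1 f3 = 0"
    using N3 o23 by (simp add: f1_def bilin \<beta>_def)
  define s2 where "s2 = sqrt (ip f1 f1 / ip f2 f2)"
  define s3 where "s3 = sqrt (ip f1 f1 / ip f3 f3)"
  have s2: "s2 > 0" "s2 * s2 = ip f1 f1 / ip f2 f2"
    using N1 N2 by (simp_all add: s2_def)
  have s3: "s3 > 0" "s3 * s3 = ip f1 f1 / ip f3 f3"
    using N1 N3 by (simp_all add: s3_def)
  define x where "x = triangular_basis (- \<alpha>) (\<alpha> * \<tau> - \<beta>) s2 (- \<tau>) s3"
  have x: "x 1 = f1" "x 2 = s2 *\<^sub>R f2" "x 3 = s3 *\<^sub>R f3"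
    by (simp_all add: x_def f1_def f2_def e1_def e2_def f3_def vec_eq_iff forall_3 algebra_simps)
  have "\<forall>i j. (1 / ip f1 f1) * ip (x i) (x j) = (if i = j then 1 else 0)"
    unfolding forall_3 using N1 N2 N3 o12 o13 o23 sym[of f2 f1] sym[of f3 f1] sym[of f3 f2] s2 s3
    by (simp add: x bilin field_simps)
  moreover have "1 / ip f1 f1 > 0"
    using N1 by simp
  ultimately show thesis
    using that s2(1) s3(1) unfolding x_def by blast
qed

theorem proposition4p8:
  fixes a :: real and ip :: "real^3 \<Rightarrow> real^3 \<Rightarrow> real"
  assumes "-1 \<le> a" and "a < 1" and "is_inner_product ip"
  shows "\<exists>lam k (x :: 3 \<Rightarrow> real^3).
           k > 0 \<and>
           (\<forall>i j. k * ip (x i) (x j) = (if i = j then 1 else 0)) \<and>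
           r3_bracket a (x 1) (x 2) = x 2 + (lam * (a - 1)) *\<^sub>R x 3 \<and>
           r3_bracket a (x 1) (x 3) = a *\<^sub>R x 3 \<and>
           r3_bracket a (x 2) (x 3) = 0 \<and>
           {M. \<exists>D\<in>derivations (r3_bracket a). matrix_wrt x D M} =
           {M. \<exists>x21 x22 x31 x33.
                 M = vector [vector [0, 0, 0],
                             vector [x21, x22, 0],
                             vector [x31, lam * (x33 - x22), x33]]}"
proof -
  obtain b c s2 t s3 k where "s2 > 0" "s3 > 0" "k > 0"
    and "\<And>i j. k * ip (triangular_basis b c s2 t s3 i) (triangular_basis b c s2 t s3 j) =
                 (if i = j then 1 else 0)"
    using inner_product_triangular_orthonormal_basis[OF assms(3)] by metis
  \<comment> \<open>only \<open>a \<noteq> 1\<close> is needed; \<open>-1 \<le> a\<close> is merely the normalisation of the parameter\<close>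
  moreover have "a \<noteq> 1"
    using assms(2) by simp
  ultimately show ?thesis
    using r3_bracket_triangular_basis[of s3 a b c s2 t]
      r3_derivation_matrices_triangular_basis[of a s2 s3 b c t]
    by (intro exI[of _ "s2 * t / s3"] exI[of _ k] exI[of _ "triangular_basis b c s2 t s3"]) simp
qed

end
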